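(* Let $L\subseteq\Sigma^*$ be regular. (1) The map \[\mathrm{LQ}(L)\to\big(\{\mathrm{DR}_L[X]: X\subseteq \mathrm{LW}(L)\},\cup,\emptyset\big),\qquad K\mapsto\{v^{-1}L^r: v\in K^r\},\] is a well-defined isomorphism of semilattices (its codomain being a $\cup$-subsemilattice of $\mathcal{P}(\mathrm{LW}(L^r))$). (2) For all $u,v\in\Sigma^*$: $\mathrm{DR}_L(u^{-1}L,v^{-1}L^r)$ holds iff $u^{-1}L\not\subseteq \mathrm{dr}_L(v^{-1}L^r)$. (3) $\mathrm{dr}_L$ restricts to a bijection from $J(\mathrm{LQ}(L^r))$ onto $M(\mathrm{LQ}(L))$, and for all $j\in J(\mathrm{LQ}(L))$ and $k\in J(\mathrm{LQ}(L^r))$ we have $\mathrm{RDR}_L(j,k)$ iff $j\not\subseteq\mathrm{dr}_L(k)$.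
   Context: $u^{-1}L=\{w:uw\in L\}$, $U^{-1}L=\bigcup_{u\in U}u^{-1}L$; $\mathrm{LW}(L)=\{u^{-1}L:u\in\Sigma^*\}$; $\mathrm{LQ}(L)$ is the set of all finite unions (including $\emptyset$) of members of $\mathrm{LW}(L)$, a finite lattice under inclusion. $w^r$ is the reversal of $w$, $K^r=\{w^r:w\in K\}$, $\overline K=\Sigma^*\setminus K$. The dependency relation $\mathrm{DR}_L\subseteq\mathrm{LW}(L)\times\mathrm{LW}(L^r)$ is defined by $\mathrm{DR}_L(u^{-1}L,v^{-1}L^r)\iff uv^r\in L$ (well-defined), and $\mathrm{DR}_L[X]=\{y:\exists x\in X,\ \mathrm{DR}_L(x,y)\}$. For a finite lattice $S$, $J(S)$ is the set of join-irreducible elements ($j$ such that $j=\bigvee X$, $X$ finite, implies $j\in X$; in particular $j\neq\bot$) and $M(S)$ the set of meet-irreducible elements (dually). The reduced dependency relation is $\mathrm{RDR}_L=\mathrm{DR}_L\cap(J(\mathrm{LQ}(L))\times J(\mathrm{LQ}(L^r)))$. $\mathrm{dr}_L\colon\mathrm{LQ}(L^r)\to\mathrm{LQ}(L)$ is the map $K\mapsto(\overline{K^r})^{-1}L$, which is an order-reversing bijection. *)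

theory Defs
  imports Main
begin

definition dfa_lang :: "(nat \<Rightarrow> 'a \<Rightarrow> nat) \<Rightarrow> nat \<Rightarrow> nat set \<Rightarrow> 'a list set" where
  "dfa_lang \<delta> q0 F = {w. fold (\<lambda>a q. \<delta> q a) w q0 \<in> F}"

definition regular :: "'a list set \<Rightarrow> bool" where
  "regular L \<longleftrightarrow> (\<exists>(Q::nat set) \<delta> q0 F. finite Q \<and> q0 \<in> Q \<and> F \<subseteq> Q \<and>
      (\<forall>q\<in>Q. \<forall>a. \<delta> q a \<in> Q) \<and> L = dfa_lang \<delta> q0 F)"

definition lquot :: "'a list \<Rightarrow> 'a list set \<Rightarrow> 'a list set" where
  "lquot u L = {w. u @ w \<in> L}"

definition lquot_set :: "'a list set \<Rightarrow> 'a list set \<Rightarrow> 'a list set" where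
  "lquot_set U L = (\<Union>u\<in>U. lquot u L)"

definition LW :: "'a list set \<Rightarrow> 'a list set set" where
  "LW L = {lquot u L | u. True}"

definition LQ :: "'a list set \<Rightarrow> 'a list set set" where
  "LQ L = {\<Union>S | S. S \<subseteq> LW L \<and> finite S}"

definition rev_lang :: "'a list set \<Rightarrow> 'a list set" where
  "rev_lang K = rev ` K"

definition DR :: "'a list set \<Rightarrow> 'a list set \<Rightarrow> 'a list set \<Rightarrow> bool" where
  "DR L x y \<longleftrightarrow> (\<exists>u v. x = lquot u L \<and> y = lquot v (rev_lang L) \<and> u @ rev v \<in> L)"

definition DR_img :: "'a list set \<Rightarrow> 'a list set set \<Rightarrow> 'a list set set" where
  "DR_img L X = {y. \<exists>x\<in>X. DR L x y}"

definition is_lub :: "'b set set \<Rightarrow> 'b set set \<Rightarrow> 'b set \<Rightarrow> bool" where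
  "is_lub S X z \<longleftrightarrow> z \<in> S \<and> (\<forall>x\<in>X. x \<subseteq> z) \<and> (\<forall>y\<in>S. (\<forall>x\<in>X. x \<subseteq> y) \<longrightarrow> z \<subseteq> y)"

definition is_glb :: "'b set set \<Rightarrow> 'b set set \<Rightarrow> 'b set \<Rightarrow> bool" where
  "is_glb S X z \<longleftrightarrow> z \<in> S \<and> (\<forall>x\<in>X. z \<subseteq> x) \<and> (\<forall>y\<in>S. (\<forall>x\<in>X. y \<subseteq> x) \<longrightarrow> y \<subseteq> z)"

definition Jirr :: "'b set set \<Rightarrow> 'b set set" where
  "Jirr S = {j \<in> S. \<forall>X. finite X \<and> X \<subseteq> S \<and> is_lub S X j \<longrightarrow> j \<in> X}"

definition Mirr :: "'b set set \<Rightarrow> 'b set set" where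
  "Mirr S = {m \<in> S. \<forall>X. finite X \<and> X \<subseteq> S \<and> is_glb S X m \<longrightarrow> m \<in> X}"

definition RDR :: "'a list set \<Rightarrow> 'a list set \<Rightarrow> 'a list set \<Rightarrow> bool" where
  "RDR L x y \<longleftrightarrow> DR L x y \<and> x \<in> Jirr (LQ L) \<and> y \<in> Jirr (LQ (rev_lang L))"

definition dr :: "'a list set \<Rightarrow> 'a list set \<Rightarrow> 'a list set" where
  "dr L K = lquot_set (- rev_lang K) L"

end

(*
  Everything rests on the fact that each K in LQ(L) is the union of the left quotients
  u^{-1}L it contains, and u^{-1}L is contained in K iff uz is not in L for every z outside K.
  This makes dr_L and dr_{L^r} mutually inverse, so dr_L is an antitone bijection
  LQ(L^r) -> LQ(L) and therefore exchanges join- and meet-irreducible elements. It also shows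
  that whether z lies in K depends only on the quotient (z^r)^{-1}L^r, which makes phi
  injective; its image is the family of DR-images because DR_L(u^{-1}L, v^{-1}L^r) just says
  that v^r lies in u^{-1}L.
*)
theory Submission
  imports Defs
begin

lemma mem_lquot [simp]: "w \<in> lquot u L \<longleftrightarrow> u @ w \<in> L"
  by (simp add: lquot_def)

lemma mem_rev_lang [simp]: "w \<in> rev_lang K \<longleftrightarrow> rev w \<in> K"
  unfolding rev_lang_def by (metis image_iff rev_rev_ident)

lemma rev_lang_rev_lang [simp]: "rev_lang (rev_lang L) = L"
  by auto

lemma mem_dr: "z \<in> dr L K \<longleftrightarrow> (\<exists>x. rev x \<notin> K \<and> x @ z \<in> L)"
  unfolding dr_def lquot_set_def by auto

lemma fold_transition_closed:
  assumes "\<forall>q\<in>Q. \<forall>a. \<delta> q a \<in> Q" "q \<in> Q"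
  shows "fold (\<lambda>a q. \<delta> q a) u q \<in> Q"
  using assms(2) by (induction u arbitrary: q) (auto simp: assms(1))

lemma finite_LW_if_regular:
  assumes "regular L" shows "finite (LW L)"
proof -
  obtain Q :: "nat set" and \<delta> q0 F where Q: "finite Q" "q0 \<in> Q"
    "\<forall>q\<in>Q. \<forall>a. \<delta> q a \<in> Q" and L: "L = dfa_lang \<delta> q0 F"
    using assms unfolding regular_def by blast
  have "lquot u L = dfa_lang \<delta> (fold (\<lambda>a q. \<delta> q a) u q0) F" for u
    unfolding L by (simp add: dfa_lang_def lquot_def)
  then have "LW L \<subseteq> (\<lambda>q. dfa_lang \<delta> q F) ` Q"
    using fold_transition_closed[OF Q(3,2)] by (auto simp: LW_def)
  then show ?thesis
    by (rule finite_surj[OF Q(1)])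
qed

lemma finite_LW_rev_lang:
  assumes "finite (LW L)" shows "finite (LW (rev_lang L))"
proof -
  have "lquot v (rev_lang L) = {w. lquot (rev w) L \<in> {q \<in> LW L. rev v \<in> q}}" for v
    by (auto simp: LW_def)
  then have "LW (rev_lang L) \<subseteq> (\<lambda>P. {w. lquot (rev w) L \<in> P}) ` Pow (LW L)"
    unfolding LW_def[of "rev_lang L"] by blast
  then show ?thesis
    by (rule finite_surj[OF iffD2[OF finite_Pow_iff assms]])
qed

lemma LW_subset_LQ: "LW L \<subseteq> LQ L"
  unfolding LQ_def by (auto intro!: exI[of _ "{_}"])

lemma LQ_eq_Union_Pow: "finite (LW L) \<Longrightarrow> LQ L = Union ` Pow (LW L)"
  by (auto simp: LQ_def intro: finite_subset)

lemma mem_LQ_iff: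
  assumes "K \<in> LQ L"
  shows "z \<in> K \<longleftrightarrow> (\<exists>u. lquot u L \<subseteq> K \<and> u @ z \<in> L)"
proof
  assume "z \<in> K"
  then obtain u where "lquot u L \<subseteq> K" "z \<in> lquot u L"
    using assms unfolding LQ_def LW_def by blast
  then show "\<exists>u. lquot u L \<subseteq> K \<and> u @ z \<in> L" by auto
qed auto

lemma Jirr_LQ_subset_LW: "Jirr (LQ L) \<subseteq> LW L"
proof
  fix j assume j: "j \<in> Jirr (LQ L)"
  then obtain S where S: "j = \<Union>S" "S \<subseteq> LW L" "finite S"
    by (auto simp: Jirr_def LQ_def)
  have "is_lub (LQ L) S j"
    using j S by (auto simp: Jirr_def is_lub_def)
  then show "j \<in> LW L"
    using j S LW_subset_LQ unfolding Jirr_def by blast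
qed

lemma is_lub_iff_is_glb_antitone:
  assumes T: "T = f ` S" and anti: "\<And>a b. a \<in> S \<Longrightarrow> b \<in> S \<Longrightarrow> f a \<subseteq> f b \<longleftrightarrow> b \<subseteq> a"
    and X: "X \<subseteq> S" and j: "j \<in> S"
  shows "is_lub S X j \<longleftrightarrow> is_glb T (f ` X) (f j)"
proof -
  have upper: "(\<forall>x\<in>X. x \<subseteq> s) \<longleftrightarrow> (\<forall>y\<in>f ` X. f s \<subseteq> y)" if "s \<in> S" for s
    using anti[OF that] X by blast
  have least: "(\<forall>s\<in>S. (\<forall>x\<in>X. x \<subseteq> s) \<longrightarrow> j \<subseteq> s) \<longleftrightarrow>
      (\<forall>t\<in>T. (\<forall>y\<in>f ` X. t \<subseteq> y) \<longrightarrow> t \<subseteq> f j)"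
    unfolding T using upper anti[OF _ j] by auto
  show ?thesis
    unfolding is_lub_def is_glb_def using upper[OF j] least j T by auto
qed

lemma bij_betw_Jirr_Mirr_antitone:
  assumes bij: "bij_betw f S T"
    and anti: "\<And>a b. a \<in> S \<Longrightarrow> b \<in> S \<Longrightarrow> f a \<subseteq> f b \<longleftrightarrow> b \<subseteq> a"
  shows "bij_betw f (Jirr S) (Mirr T)"
proof -
  have T: "T = f ` S" and inj: "inj_on f S"
    using bij by (auto simp: bij_betw_def)
  have lub_glb: "is_lub S X j \<longleftrightarrow> is_glb T (f ` X) (f j)" if "X \<subseteq> S" "j \<in> S" for X j
    using is_lub_iff_is_glb_antitone[OF T anti that] .
  have finite_image: "finite (f ` X) \<longleftrightarrow> finite X" if "X \<subseteq> S" for X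
    using finite_image_iff inj inj_on_subset that by blast
  have mem_image: "f j \<in> f ` X \<longleftrightarrow> j \<in> X" if "X \<subseteq> S" "j \<in> S" for X j
    using inj that by (auto dest: inj_onD)
  have "f j \<in> Mirr T \<longleftrightarrow> j \<in> Jirr S" if j: "j \<in> S" for j
  proof -
    have "f j \<in> Mirr T \<longleftrightarrow>
        (\<forall>X. X \<subseteq> S \<longrightarrow> finite (f ` X) \<and> is_glb T (f ` X) (f j) \<longrightarrow> f j \<in> f ` X)"
      unfolding Mirr_def T using j by (auto simp: subset_image_iff)
    also have "\<dots> \<longleftrightarrow> j \<in> Jirr S"
      unfolding Jirr_def using j lub_glb finite_image mem_image by auto
    finally show ?thesis .
  qed
  then have "f ` Jirr S = Mirr T"
    using T by (auto simp: Jirr_def Mirr_def)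
  then show ?thesis
    using bij_betw_subset[OF bij] by (auto simp: Jirr_def)
qed

lemma dr_in_LQ: "finite (LW L) \<Longrightarrow> dr L K \<in> LQ L"
  unfolding dr_def lquot_set_def LQ_eq_Union_Pow by (auto simp: LW_def)

lemma dr_antimono: "K1 \<subseteq> K2 \<Longrightarrow> dr L K2 \<subseteq> dr L K1"
  unfolding mem_dr subset_iff by blast

lemma dr_dr_rev_lang:
  assumes "K \<in> LQ L" shows "dr L (dr (rev_lang L) K) = K"
proof -
  have "rev x \<notin> dr (rev_lang L) K \<longleftrightarrow> lquot x L \<subseteq> K" for x
    by (auto simp: mem_dr) (metis rev_rev_ident)
  then show ?thesis
    using mem_LQ_iff[OF assms] by (auto simp: mem_dr)
qed

lemma dr_subset_dr_iff:
  assumes "K1 \<in> LQ (rev_lang L)" "K2 \<in> LQ (rev_lang L)"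
  shows "dr L K1 \<subseteq> dr L K2 \<longleftrightarrow> K2 \<subseteq> K1"
  using dr_antimono[of "dr L K1" "dr L K2" "rev_lang L"] dr_antimono[of K2 K1 L]
    dr_dr_rev_lang[OF assms(1)] dr_dr_rev_lang[OF assms(2)]
  by auto

lemma bij_betw_dr:
  assumes "finite (LW L)" shows "bij_betw (dr L) (LQ (rev_lang L)) (LQ L)"
proof (rule bij_betw_byWitness[where f' = "dr (rev_lang L)"])
  show "\<forall>K\<in>LQ (rev_lang L). dr (rev_lang L) (dr L K) = K"
    using dr_dr_rev_lang[of _ "rev_lang L"] by simp
  show "\<forall>K\<in>LQ L. dr L (dr (rev_lang L) K) = K"
    using dr_dr_rev_lang by blast
  show "dr L ` LQ (rev_lang L) \<subseteq> LQ L"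
    using dr_in_LQ[OF assms] by blast
  show "dr (rev_lang L) ` LQ L \<subseteq> LQ (rev_lang L)"
    using dr_in_LQ[OF finite_LW_rev_lang[OF assms]] by blast
qed

lemma DR_lquot_iff: "DR L (lquot u L) (lquot v (rev_lang L)) \<longleftrightarrow> u @ rev v \<in> L"
proof
  assume "DR L (lquot u L) (lquot v (rev_lang L))"
  then obtain u' v' where u: "lquot u L = lquot u' L"
    and v: "lquot v (rev_lang L) = lquot v' (rev_lang L)" and "u' @ rev v' \<in> L"
    unfolding DR_def by blast
  then have "rev v' \<in> lquot u L"
    by simp
  then have "rev u \<in> lquot v (rev_lang L)"
    unfolding v by simp
  then show "u @ rev v \<in> L"
    by simp
qed (auto simp: DR_def)

lemma DR_lquot_iff_not_subset_dr:
  "DR L (lquot u L) (lquot v (rev_lang L)) \<longleftrightarrow> \<not> lquot u L \<subseteq> dr L (lquot v (rev_lang L))"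
  unfolding DR_lquot_iff subset_iff mem_lquot mem_dr by force

lemma RDR_iff_not_subset_dr:
  assumes j: "j \<in> Jirr (LQ L)" and k: "k \<in> Jirr (LQ (rev_lang L))"
  shows "RDR L j k \<longleftrightarrow> \<not> j \<subseteq> dr L k"
proof -
  obtain u v where "j = lquot u L" "k = lquot v (rev_lang L)"
    using j k Jirr_LQ_subset_LW by (fastforce simp: LW_def)
  then show ?thesis
    using j k DR_lquot_iff_not_subset_dr unfolding RDR_def by blast
qed

lemma DR_img_subset_LW: "DR_img L X \<subseteq> LW (rev_lang L)"
  unfolding DR_img_def DR_def LW_def by blast

lemma DR_img_empty [simp]: "DR_img L {} = {}"
  by (simp add: DR_img_def)

lemma DR_img_Un: "DR_img L (X \<union> Y) = DR_img L X \<union> DR_img L Y"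
  by (auto simp: DR_img_def)

lemma Un_in_DR_imgs:
  assumes "A \<in> {DR_img L X | X. X \<subseteq> LW L}" and "B \<in> {DR_img L X | X. X \<subseteq> LW L}"
  shows "A \<union> B \<in> {DR_img L X | X. X \<subseteq> LW L}"
proof -
  obtain X Y where "A = DR_img L X" "B = DR_img L Y" "X \<union> Y \<subseteq> LW L"
    using assms by blast
  then show ?thesis
    by (auto simp flip: DR_img_Un)
qed

lemma DR_img_eq:
  assumes "X \<subseteq> LW L"
  shows "DR_img L X = {lquot v (rev_lang L) | v. v \<in> rev_lang (\<Union>X)}"
proof -
  have "DR L x y \<longleftrightarrow> (\<exists>v. y = lquot v (rev_lang L) \<and> rev v \<in> x)" if "x \<in> LW L" for x y
  proof -
    obtain u where x: "x = lquot u L"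
      using \<open>x \<in> LW L\<close> unfolding LW_def by blast
    have "DR L x y \<Longrightarrow> \<exists>v. y = lquot v (rev_lang L)"
      unfolding DR_def by blast
    then show ?thesis
      unfolding x using DR_lquot_iff by auto
  qed
  then have "DR_img L X = {y. \<exists>x\<in>X. \<exists>v. y = lquot v (rev_lang L) \<and> rev v \<in> x}"
    unfolding DR_img_def using assms by (intro Collect_cong bex_cong) auto
  then show ?thesis
    by auto
qed

definition rev_quots :: "'a list set \<Rightarrow> 'a list set \<Rightarrow> 'a list set set" where
  "rev_quots L K = {lquot v (rev_lang L) | v. v \<in> rev_lang K}"

lemma LQ_eq_vimage_rev_quots:
  assumes "K \<in> LQ L"
  shows "K = {z. lquot (rev z) (rev_lang L) \<in> rev_quots L K}"
proof -
  have mem_K: "z \<in> K \<longleftrightarrow> (\<exists>u. lquot u L \<subseteq> K \<and> rev u \<in> lquot (rev z) (rev_lang L))" for z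
    using mem_LQ_iff[OF assms] by simp
  show ?thesis
  proof (intro set_eqI iffI)
    fix z assume "z \<in> K"
    then show "z \<in> {z. lquot (rev z) (rev_lang L) \<in> rev_quots L K}"
      unfolding rev_quots_def by force
  next
    fix z assume "z \<in> {z. lquot (rev z) (rev_lang L) \<in> rev_quots L K}"
    then obtain v where "rev v \<in> K" and "lquot v (rev_lang L) = lquot (rev z) (rev_lang L)"
      unfolding rev_quots_def by auto
    then show "z \<in> K"
      using mem_K[of "rev v"] mem_K[of z] by (simp del: mem_lquot)
  qed
qed

lemma bij_betw_rev_quots:
  assumes "finite (LW L)"
  shows "bij_betw (rev_quots L) (LQ L) {DR_img L X | X. X \<subseteq> LW L}"
proof (rule bij_betw_imageI)
  show "inj_on (rev_quots L) (LQ L)"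
  proof (rule inj_onI)
    fix K1 K2 assume "K1 \<in> LQ L" "K2 \<in> LQ L" and eq: "rev_quots L K1 = rev_quots L K2"
    have "K1 = {z. lquot (rev z) (rev_lang L) \<in> rev_quots L K2}"
      using LQ_eq_vimage_rev_quots[OF \<open>K1 \<in> LQ L\<close>] unfolding eq .
    also have "\<dots> = K2"
      using LQ_eq_vimage_rev_quots[OF \<open>K2 \<in> LQ L\<close>] by (rule sym)
    finally show "K1 = K2" .
  qed
  have "rev_quots L ` LQ L = (\<lambda>X. rev_quots L (\<Union>X)) ` Pow (LW L)"
    by (simp add: LQ_eq_Union_Pow[OF assms] image_image)
  also have "\<dots> = DR_img L ` Pow (LW L)"
    by (rule image_cong) (simp_all add: DR_img_eq rev_quots_def)
  finally show "rev_quots L ` LQ L = {DR_img L X | X. X \<subseteq> LW L}"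
    by blast
qed

theorem theorem3p11:
  fixes L :: "('a::finite) list set"
  assumes "regular L"
  defines "\<phi> \<equiv> (\<lambda>K. {lquot v (rev_lang L) | v. v \<in> rev_lang K})"
    and "C \<equiv> {DR_img L X | X. X \<subseteq> LW L}"
  shows "(C \<subseteq> Pow (LW (rev_lang L)) \<and> {} \<in> C \<and> (\<forall>A\<in>C. \<forall>B\<in>C. A \<union> B \<in> C)
          \<and> bij_betw \<phi> (LQ L) C
          \<and> \<phi> {} = {}
          \<and> (\<forall>K1\<in>LQ L. \<forall>K2\<in>LQ L. \<phi> (K1 \<union> K2) = \<phi> K1 \<union> \<phi> K2))
       \<and> (\<forall>u v. DR L (lquot u L) (lquot v (rev_lang L))
                 \<longleftrightarrow> \<not> lquot u L \<subseteq> dr L (lquot v (rev_lang L)))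
       \<and> bij_betw (dr L) (Jirr (LQ (rev_lang L))) (Mirr (LQ L))
       \<and> (\<forall>j\<in>Jirr (LQ L). \<forall>k\<in>Jirr (LQ (rev_lang L)). RDR L j k \<longleftrightarrow> \<not> j \<subseteq> dr L k)"
proof -
  have fin: "finite (LW L)"
    using assms(1) by (rule finite_LW_if_regular)
  have \<phi>: "\<phi> = rev_quots L"
    unfolding \<phi>_def by (simp add: fun_eq_iff rev_quots_def)
  have C_sub: "C \<subseteq> Pow (LW (rev_lang L))" and C_empty: "{} \<in> C"
    unfolding C_def using DR_img_subset_LW DR_img_empty by blast+
  have C_Un: "A \<union> B \<in> C" if "A \<in> C" "B \<in> C" for A B
    using that unfolding C_def by (rule Un_in_DR_imgs)
  have \<phi>_bij: "bij_betw \<phi> (LQ L) C"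
    unfolding \<phi> C_def using fin by (rule bij_betw_rev_quots)
  have dr_bij: "bij_betw (dr L) (Jirr (LQ (rev_lang L))) (Mirr (LQ L))"
    using bij_betw_dr[OF fin] dr_subset_dr_iff by (rule bij_betw_Jirr_Mirr_antitone)
  have \<phi>_hom: "\<phi> {} = {}" "\<phi> (K1 \<union> K2) = \<phi> K1 \<union> \<phi> K2" for K1 K2
    unfolding \<phi>_def by auto
  show ?thesis
    using C_Un by (simp add: C_sub C_empty \<phi>_bij \<phi>_hom dr_bij
        DR_lquot_iff_not_subset_dr RDR_iff_not_subset_dr)
qed

end
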